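(* Fix $\delta_1,\delta_2>0$ small with $\delta_1/\delta_2\in\mathbb{N}$ and $\delta_2<\delta_1^3$. There exists a function $g$ such that for all $k\in\mathbb{N}$, $\varepsilon>0$, every $m\in\mathbb{N}\cup\{\infty\}$ with $m>g(k,\varepsilon)$, and every group homomorphism $f:\ell^1(\mathbb{N}_{\le m};\mathbb{R}/\mathbb{Z})\to(\mathbb{R}/\mathbb{Z})^k$, there exists $s\in S_m$ with $|f(s)|<\varepsilon$ (i.e. $S_m$ meets the Bohr set $\{b: |f(b)|<\varepsilon\}$).
   Context: $\|x\|_{\mathbb{R}/\mathbb{Z}}$ is the distance from $x$ to the nearest integer. For $m\in\mathbb{N}$, $\ell^1(\mathbb{N}_{\le m};\mathbb{R}/\mathbb{Z})$ is the group $(\mathbb{R}/\mathbb{Z})^m$ with norm $\sum_{i\le m}\|a_i\|_{\mathbb{R}/\mathbb{Z}}$; for $m=\infty$ it is $\ell^1(\mathbb{N};\mathbb{R}/\mathbb{Z})$, the group of sequences $(a_1,a_2,\dots)$ in $\mathbb{R}/\mathbb{Z}$ with $\sum_i\|a_i\|_{\mathbb{R}/\mathbb{Z}}<\infty$ under coordinatewise addition. For $y\in(\mathbb{R}/\mathbb{Z})^k$, $|y|$ is the maximum of the $\mathbb{R}/\mathbb{Z}$-norms of its coordinates. Let $\eta_m=2^{-100m}$ for $m\in\mathbb{N}$ and $\eta_\infty=0$. $S_m$ is the set of $(a_1,a_2,\dots)\in\ell^1(\mathbb{N}_{\le m};\mathbb{R}/\mathbb{Z})$ for which there is an index $i$ with: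 (1) $a_i\in(-\delta_1-(2-\eta_m)\delta_2,\,-\delta_1+(2-\eta_m)\delta_2)\subset\mathbb{R}/\mathbb{Z}$; (2) for all $j\ne i$, $a_j\in(-(2-\eta_m)\delta_2,(2-\eta_m)\delta_2)\subset\mathbb{R}/\mathbb{Z}$; (3) $\delta_1-(2-\eta_m)\delta_2<\sum_{j\ne i}\|a_j\|_{\mathbb{R}/\mathbb{Z}}<\delta_1+(2-\eta_m)\delta_2$. *)

theory Defs
  imports "HOL-Library.Extended_Nat" Complex_Main
begin

quotient_type rz = real / "\<lambda>x y. x - y \<in> \<int>"
  morphisms rep_rz rz_of
proof (rule equivpI)
  show "reflp (\<lambda>x y :: real. x - y \<in> \<int>)" by (auto intro: reflpI)
  show "symp (\<lambda>x y :: real. x - y \<in> \<int>)"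
    by (rule sympI) (metis Ints_minus minus_diff_eq)
  show "transp (\<lambda>x y :: real. x - y \<in> \<int>)"
    by (rule transpI) (metis Ints_add diff_add_cancel add_diff_eq)
qed

instantiation rz :: ab_group_add
begin
lift_definition zero_rz :: rz is "0 :: real" .
lift_definition plus_rz :: "rz \<Rightarrow> rz \<Rightarrow> rz" is "(+) :: real \<Rightarrow> real \<Rightarrow> real"
  by (metis Ints_add add_diff_add)
lift_definition uminus_rz :: "rz \<Rightarrow> rz" is "uminus :: real \<Rightarrow> real"
  by (metis Ints_minus minus_diff_eq minus_diff_minus)
lift_definition minus_rz :: "rz \<Rightarrow> rz \<Rightarrow> rz" is "(-) :: real \<Rightarrow> real \<Rightarrow> real"
proof -
  fix a b c d :: real assume "a - b \<in> \<int>" "c - d \<in> \<int>"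
  then have "(a - b) - (c - d) \<in> \<int>" by (rule Ints_diff)
  then show "a - c - (b - d) \<in> \<int>" by (simp add: algebra_simps)
qed
instance
  by standard (transfer; simp add: algebra_simps)+
end

lift_definition rznorm :: "rz \<Rightarrow> real" is "\<lambda>x. \<bar>x - of_int (round x)\<bar>"
proof -
  fix x y :: real assume "x - y \<in> \<int>"
  then obtain n where n: "x = y + of_int n" by (metis Ints_cases add_diff_cancel_left' diff_add_cancel add.commute)
  have "round x = round y + n" unfolding n round_def
    by (metis add.commute add.left_commute floor_add_int)
  then show "\<bar>x - of_int (round x)\<bar> = \<bar>y - of_int (round y)\<bar>" using n by simp
qed

definition in_arc :: "real \<Rightarrow> real \<Rightarrow> rz \<Rightarrow> bool" where
  "in_arc c r a \<longleftrightarrow> (\<exists>x. c - r < x \<and> x < c + r \<and> a = rz_of x)"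

text \<open>Elements are sequences indexed by nat; coordinates i with enat i \<ge> m are forced to 0
  (so indices 0,...,m-1 play the role of 1,...,m). For m = \<infinity> the l^1 condition is required.\<close>
definition ell1 :: "enat \<Rightarrow> (nat \<Rightarrow> rz) set" where
  "ell1 m = {a. (\<forall>i. m \<le> enat i \<longrightarrow> a i = 0) \<and> summable (\<lambda>i. rznorm (a i))}"

definition rz_maxnorm :: "nat \<Rightarrow> (nat \<Rightarrow> rz) \<Rightarrow> real" where
  "rz_maxnorm k y = Max (insert 0 {rznorm (y i) | i. i < k})"

definition eta :: "enat \<Rightarrow> real" where
  "eta m = (case m of enat n \<Rightarrow> 2 powr (- 100 * real n) | \<infinity> \<Rightarrow> 0)"

definition S_set :: "real \<Rightarrow> real \<Rightarrow> enat \<Rightarrow> (nat \<Rightarrow> rz) set" where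
  "S_set \<delta>1 \<delta>2 m = {a \<in> ell1 m. \<exists>i. enat i < m \<and>
      in_arc (- \<delta>1) ((2 - eta m) * \<delta>2) (a i) \<and>
      (\<forall>j. j \<noteq> i \<longrightarrow> in_arc 0 ((2 - eta m) * \<delta>2) (a j)) \<and>
      \<delta>1 - (2 - eta m) * \<delta>2 < (\<Sum>j. if j = i then 0 else rznorm (a j)) \<and>
      (\<Sum>j. if j = i then 0 else rznorm (a j)) < \<delta>1 + (2 - eta m) * \<delta>2}"

definition is_hom :: "enat \<Rightarrow> nat \<Rightarrow> ((nat \<Rightarrow> rz) \<Rightarrow> (nat \<Rightarrow> rz)) \<Rightarrow> bool" where
  "is_hom m k f \<longleftrightarrow> (\<forall>a\<in>ell1 m. \<forall>b\<in>ell1 m. \<forall>i<k. f (\<lambda>j. a j + b j) i = f a i + f b i)"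

end

theory Submission
  imports Defs "HOL-Library.FuncSet"
begin

text \<open>Let \<open>n = \<delta>1 / \<delta>2\<close> and let \<open>e j\<close> be the sequence with entry \<open>\<delta>2\<close> at coordinate \<open>j\<close>
  and \<open>0\<close> elsewhere. Cut \<open>R/Z\<close> into \<open>M\<close> arcs of length \<open>1/M\<close>; the vectors \<open>f (e j)\<close>,
  \<open>j \<le> n M^k\<close>, then fall into at most \<open>M^k\<close> boxes, so by pigeonhole \<open>n + 1\<close> of them,
  \<open>f (e i)\<close> and \<open>f (e j)\<close> for \<open>j \<in> J\<close>, share a box. The element \<open>s = \<Sum>j\<in>J. e j - e i\<close>
  has entry \<open>-n \<delta>2 = -\<delta>1\<close> at \<open>i\<close> and \<open>\<delta>2\<close> at each \<open>j \<in> J\<close>, so it lies in \<open>S_m\<close>,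
  while every coordinate of \<open>f s\<close> has norm at most \<open>n/M\<close>, which is below \<open>\<epsilon>\<close> for \<open>M > n/\<epsilon>\<close>.\<close>

lemma rznorm_rz_of: "rznorm (rz_of x) = \<bar>x - of_int (round x)\<bar>"
  by (simp add: rznorm.abs_eq)

lemma rz_of_add: "rz_of (x + y) = rz_of x + rz_of y"
  by (simp add: plus_rz.abs_eq)

lemma rz_of_diff: "rz_of (x - y) = rz_of x - rz_of y"
  by (simp add: minus_rz.abs_eq)

lemma rz_of_uminus: "rz_of (- x) = - rz_of x"
  by (simp add: uminus_rz.abs_eq)

lemma rz_of_zero: "rz_of 0 = 0"
  by (simp add: zero_rz_def)

lemma rz_of_sum: "rz_of (\<Sum>j\<in>J. x j) = (\<Sum>j\<in>J. rz_of (x j))"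
  by (induction J rule: infinite_finite_induct) (auto simp: rz_of_zero rz_of_add)

lemma rz_of_frac_rep_rz: "rz_of (frac (rep_rz a)) = a"
proof -
  have "rz_of (frac (rep_rz a)) = rz_of (rep_rz a)"
    by (simp add: rz.abs_eq_iff frac_def)
  then show ?thesis
    by (metis Quotient3_abs_rep Quotient3_rz)
qed

lemma rz_of_surj: "\<exists>x. a = rz_of x"
  by (metis Quotient3_abs_rep Quotient3_rz)

lemma rznorm_nonneg: "0 \<le> rznorm a"
  using rz_of_surj[of a] by (auto simp: rznorm_rz_of)

lemma rznorm_zero: "rznorm 0 = 0"
  by (simp add: zero_rz.abs_eq rznorm_rz_of)

lemma rznorm_rz_of_le_abs: "rznorm (rz_of x) \<le> \<bar>x\<bar>"
  using round_diff_minimal[of x 0] by (simp add: rznorm_rz_of)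

lemma rznorm_rz_of_small: "\<bar>x\<bar> < 1/2 \<Longrightarrow> rznorm (rz_of x) = \<bar>x\<bar>"
  using round_unique'[of x 0] by (simp add: rznorm_rz_of)

lemma rznorm_add_le: "rznorm (a + b) \<le> rznorm a + rznorm b"
proof -
  obtain x y where a: "a = rz_of x" and b: "b = rz_of y"
    using rz_of_surj by metis
  have "rznorm (a + b) = \<bar>x + y - of_int (round (x + y))\<bar>"
    by (simp add: a b rz_of_add[symmetric] rznorm_rz_of)
  also have "\<dots> \<le> \<bar>x + y - of_int (round x + round y)\<bar>"
    by (rule round_diff_minimal)
  also have "\<dots> \<le> \<bar>x - of_int (round x)\<bar> + \<bar>y - of_int (round y)\<bar>"
    by simp
  finally show ?thesis
    by (simp add: a b rznorm_rz_of)
qed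

lemma rznorm_uminus: "rznorm (- a) = rznorm a"
proof -
  have le: "rznorm (- rz_of x) \<le> rznorm (rz_of x)" for x
    using round_diff_minimal[of "- x" "- round x"]
    by (simp add: rz_of_uminus[symmetric] rznorm_rz_of abs_minus_commute)
  obtain x where "a = rz_of x"
    using rz_of_surj by metis
  then show ?thesis
    using le[of x] le[of "- x"] by (simp add: rz_of_uminus)
qed

lemma rznorm_sum_le: "rznorm (\<Sum>j\<in>J. a j) \<le> (\<Sum>j\<in>J. rznorm (a j))"
proof (induction J rule: infinite_finite_induct)
  case (insert x F)
  then show ?case
    using rznorm_add_le[of "a x" "sum a F"] by simp
qed (auto simp: rznorm_zero)

definition rz_cell :: "nat \<Rightarrow> rz \<Rightarrow> nat" where
  "rz_cell M a = nat \<lfloor>real M * frac (rep_rz a)\<rfloor>"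

lemma rz_cell_less: "0 < M \<Longrightarrow> rz_cell M a < M"
  using frac_lt_1[of "rep_rz a"] frac_ge_0[of "rep_rz a"]
  by (simp add: rz_cell_def nat_less_iff floor_less_iff)

lemma abs_diff_less_one_if_floor_eq:
  fixes x y :: real
  assumes "\<lfloor>x\<rfloor> = \<lfloor>y\<rfloor>"
  shows "\<bar>x - y\<bar> < 1"
  using floor_correct[of x] floor_correct[of y] unfolding assms abs_less_iff by linarith

lemma rznorm_diff_le_if_same_cell:
  assumes M: "0 < M" and cell: "rz_cell M a = rz_cell M b"
  shows "rznorm (a - b) \<le> 1 / real M"
proof -
  define u v where "u = frac (rep_rz a)" and "v = frac (rep_rz b)"
  have "0 \<le> \<lfloor>real M * u\<rfloor>" "0 \<le> \<lfloor>real M * v\<rfloor>"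
    by (simp_all add: u_def v_def frac_ge_0)
  then have "\<lfloor>real M * u\<rfloor> = \<lfloor>real M * v\<rfloor>"
    using cell unfolding rz_cell_def u_def[symmetric] v_def[symmetric] by (simp add: eq_nat_nat_iff)
  then have "\<bar>real M * u - real M * v\<bar> < 1"
    by (rule abs_diff_less_one_if_floor_eq)
  then have "real M * \<bar>u - v\<bar> < 1"
    by (simp add: abs_mult right_diff_distrib[symmetric])
  then have "\<bar>u - v\<bar> < 1 / real M"
    using M by (simp add: field_simps)
  moreover have "a - b = rz_of (u - v)"
    by (simp add: u_def v_def rz_of_diff rz_of_frac_rep_rz)
  ultimately show ?thesis
    using rznorm_rz_of_le_abs[of "u - v"] by simp
qed

lemma ell1_zero: "(\<lambda>_. 0) \<in> ell1 m"
  by (simp add: ell1_def rznorm_zero)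

lemma ell1_add:
  assumes "a \<in> ell1 m" "b \<in> ell1 m"
  shows "(\<lambda>i. a i + b i) \<in> ell1 m"
proof -
  have "summable (\<lambda>i. rznorm (a i) + rznorm (b i))"
    using assms by (intro summable_add) (simp_all add: ell1_def)
  then have "summable (\<lambda>i. rznorm (a i + b i))"
    by (rule summable_comparison_test'[where N = 0]) (simp add: rznorm_nonneg rznorm_add_le)
  then show ?thesis
    using assms by (simp add: ell1_def)
qed

lemma ell1_uminus: "a \<in> ell1 m \<Longrightarrow> (\<lambda>i. - a i) \<in> ell1 m"
  by (simp add: ell1_def rznorm_uminus)

lemma ell1_diff: "a \<in> ell1 m \<Longrightarrow> b \<in> ell1 m \<Longrightarrow> (\<lambda>i. a i - b i) \<in> ell1 m"
  using ell1_add[of a m "\<lambda>i. - b i"] ell1_uminus[of b m] by simp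

lemma ell1_sum:
  "finite L \<Longrightarrow> (\<And>l. l \<in> L \<Longrightarrow> v l \<in> ell1 m) \<Longrightarrow> (\<lambda>i. \<Sum>l\<in>L. v l i) \<in> ell1 m"
  by (induction L rule: finite_induct) (simp_all add: ell1_zero ell1_add)

lemma ell1_finite_support:
  assumes "finite {i. a i \<noteq> 0}" and "\<And>i. a i \<noteq> 0 \<Longrightarrow> enat i < m"
  shows "a \<in> ell1 m"
  unfolding ell1_def
proof (intro CollectI conjI allI impI)
  show "a i = 0" if "m \<le> enat i" for i
    using assms(2)[of i] that by (meson leD)
  show "summable (\<lambda>i. rznorm (a i))"
    using assms(1) by (rule summable_finite) (simp add: rznorm_zero)
qed

lemma is_hom_add:
  "is_hom m k f \<Longrightarrow> c < k \<Longrightarrow> a \<in> ell1 m \<Longrightarrow> b \<in> ell1 m \<Longrightarrow>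
    f (\<lambda>i. a i + b i) c = f a c + f b c"
  unfolding is_hom_def by blast

lemma is_hom_zero: "is_hom m k f \<Longrightarrow> c < k \<Longrightarrow> f (\<lambda>_. 0) c = 0"
  using is_hom_add[OF _ _ ell1_zero ell1_zero] by simp

lemma is_hom_diff:
  assumes "is_hom m k f" "c < k" "a \<in> ell1 m" "b \<in> ell1 m"
  shows "f (\<lambda>i. a i - b i) c = f a c - f b c"
  using is_hom_add[OF assms(1,2) ell1_diff[OF assms(3,4)] assms(4)] by simp

lemma is_hom_sum:
  assumes "is_hom m k f" "c < k" "finite L" "\<And>l. l \<in> L \<Longrightarrow> v l \<in> ell1 m"
  shows "f (\<lambda>i. \<Sum>l\<in>L. v l i) c = (\<Sum>l\<in>L. f (v l) c)"
  using assms(3,4)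
proof (induction L rule: finite_induct)
  case empty
  then show ?case
    using is_hom_zero assms(1,2) by simp
next
  case (insert l L)
  then show ?case
    using is_hom_add[OF assms(1,2), of "v l" "\<lambda>i. \<Sum>l\<in>L. v l i"] ell1_sum[of L v m] by simp
qed

lemma pigeonhole_close_coordinates:
  fixes v :: "nat \<Rightarrow> nat \<Rightarrow> rz"
  assumes M: "0 < M"
  obtains i J where "i \<notin> J" "finite J" "card J = n" "insert i J \<subseteq> {..n * M ^ k}"
    "\<And>j t. j \<in> J \<Longrightarrow> t < k \<Longrightarrow> rznorm (v j t - v i t) \<le> 1 / real M"
proof -
  define h where "h j = restrict (\<lambda>t. rz_cell M (v j t)) {..<k}" for j
  define A where "A = {..n * M ^ k}"
  define B where "B = (\<Pi>\<^sub>E t\<in>{..<k}. {..<M})"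
  have hAB: "h \<in> A \<rightarrow> B"
    using rz_cell_less[OF M] by (auto simp: h_def B_def)
  have B: "finite B" "B \<noteq> {}" "card B = M ^ k"
    using M by (auto simp: B_def finite_PiE card_PiE PiE_eq_empty_iff)
  then obtain y where "card A \<le> card (h -` {y} \<inter> A) * M ^ k"
    using pigeonhole_card[OF hAB _ B(1,2)] by (auto simp: A_def)
  moreover define F where "F = h -` {y} \<inter> A"
  ultimately have "n < card F"
    using M by (auto simp: A_def intro: ccontr dest!: mult_le_mono1[of _ n "M ^ k"] leI)
  moreover have "finite F"
    by (simp add: F_def A_def)
  moreover obtain i where i: "i \<in> F"
    using \<open>n < card F\<close> by fastforce
  ultimately have "n \<le> card (F - {i})"
    by simp
  then obtain J where J: "J \<subseteq> F - {i}" "card J = n" "finite J"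
    by (metis obtain_subset_with_card_n)
  show thesis
  proof
    show "insert i J \<subseteq> {..n * M ^ k}"
      using i J by (auto simp: F_def A_def)
    show "rznorm (v j t - v i t) \<le> 1 / real M" if "j \<in> J" "t < k" for j t
    proof (rule rznorm_diff_le_if_same_cell[OF M])
      have "h j t = h i t"
        using i J that by (auto simp: F_def)
      then show "rz_cell M (v j t) = rz_cell M (v i t)"
        using that by (simp add: h_def)
    qed
  qed (use J in auto)
qed

lemma eta_less_one: "0 < m \<Longrightarrow> eta m < 1"
  by (cases m) (auto simp: eta_def zero_enat_def intro!: powr_less_one)

lemma spike_in_S_set:
  assumes \<delta>2: "0 < \<delta>2" "\<delta>2 < 1/2" and \<delta>1: "\<delta>1 = real (card J) * \<delta>2"
    and J: "finite J" "i \<notin> J" and m: "enat i < m" "\<And>j. j \<in> J \<Longrightarrow> enat j < m"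
  shows "(\<lambda>t. if t = i then rz_of (- \<delta>1) else if t \<in> J then rz_of \<delta>2 else 0)
    \<in> S_set \<delta>1 \<delta>2 m" (is "?s \<in> _")
proof -
  define r where "r = (2 - eta m) * \<delta>2"
  have "eta m < 1"
    using m(1) by (intro eta_less_one) (auto intro: le_less_trans[OF zero_le])
  then have r: "\<delta>2 < r"
    using \<delta>2 by (simp add: r_def algebra_simps)
  have "?s \<in> ell1 m"
    using J m
    by (intro ell1_finite_support) (auto split: if_splits intro: finite_subset[of _ "insert i J"])
  moreover have "(\<Sum>j. if j = i then 0 else rznorm (?s j)) = \<delta>1"
  proof -
    have "(\<Sum>j. if j = i then 0 else rznorm (?s j)) = (\<Sum>j\<in>J. if j = i then 0 else rznorm (?s j))"
      using J by (intro suminf_finite) (auto simp: rznorm_zero)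
    also have "\<dots> = (\<Sum>j\<in>J. \<delta>2)"
      using J \<delta>2 by (intro sum.cong) (auto simp: rznorm_rz_of_small)
    finally show ?thesis
      using \<delta>1 by simp
  qed
  moreover have "in_arc (- \<delta>1) r (?s i)"
    using r \<delta>2 unfolding in_arc_def by (intro exI[of _ "- \<delta>1"]) auto
  moreover have "in_arc 0 r (?s j)" if "j \<noteq> i" for j
  proof (cases "j \<in> J")
    case True
    then show ?thesis
      using r \<delta>2 that unfolding in_arc_def by (intro exI[of _ \<delta>2]) auto
  next
    case False
    then show ?thesis
      using r \<delta>2 that unfolding in_arc_def by (intro exI[of _ 0]) (auto simp: rz_of_zero)
  qed
  ultimately show ?thesis
    using m(1) r \<delta>2 unfolding S_set_def r_def[symmetric] by auto
qed

definition single_rz :: "nat \<Rightarrow> real \<Rightarrow> nat \<Rightarrow> rz" where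
  "single_rz j x = (\<lambda>t. if t = j then rz_of x else 0)"

lemma sum_single_rz_diff:
  assumes "finite J" "i \<notin> J"
  shows "(\<lambda>t. \<Sum>j\<in>J. single_rz j x t - single_rz i x t) =
    (\<lambda>t. if t = i then rz_of (- (real (card J) * x)) else if t \<in> J then rz_of x else 0)"
proof
  fix t
  have "(\<Sum>j\<in>J. single_rz i x i) = rz_of (real (card J) * x)"
    by (simp add: single_rz_def rz_of_sum[symmetric])
  then show "(\<Sum>j\<in>J. single_rz j x t - single_rz i x t) =
    (if t = i then rz_of (- (real (card J) * x)) else if t \<in> J then rz_of x else 0)"
    using assms by (auto simp: sum_subtractf single_rz_def rz_of_uminus)
qed

lemma rz_maxnorm_less:
  assumes "0 < \<epsilon>" "\<And>t. t < k \<Longrightarrow> rznorm (y t) < \<epsilon>"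
  shows "rz_maxnorm k y < \<epsilon>"
proof -
  have "{rznorm (y t) | t. t < k} = (\<lambda>t. rznorm (y t)) ` {..<k}"
    by auto
  then show ?thesis
    using assms by (simp add: rz_maxnorm_def)
qed

lemma S_set_meets_Bohr_set:
  assumes \<delta>2: "0 < \<delta>2" "\<delta>2 < 1/2" and \<delta>1: "\<delta>1 = real n * \<delta>2"
    and M: "0 < M" "real n / real M < \<epsilon>"
    and m: "enat (n * M ^ k) < m" and f: "is_hom m k f"
  shows "\<exists>s\<in>S_set \<delta>1 \<delta>2 m. rz_maxnorm k (f s) < \<epsilon>"
proof -
  obtain i J where J: "i \<notin> J" "finite J" "card J = n" "insert i J \<subseteq> {..n * M ^ k}"
    and close: "\<And>j t. j \<in> J \<Longrightarrow> t < k \<Longrightarrow>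
      rznorm (f (single_rz j \<delta>2) t - f (single_rz i \<delta>2) t) \<le> 1 / real M"
    using pigeonhole_close_coordinates[OF M(1), of n k "\<lambda>j. f (single_rz j \<delta>2)"] by metis
  have below_m: "enat j < m" if "j \<in> insert i J" for j
  proof -
    have "enat j \<le> enat (n * M ^ k)"
      using J(4) that by auto
    then show ?thesis
      using m by (rule le_less_trans)
  qed
  have single: "single_rz j \<delta>2 \<in> ell1 m" if "j \<in> insert i J" for j
    using below_m[OF that] by (intro ell1_finite_support) (auto simp: single_rz_def split: if_splits)
  define s where "s = (\<lambda>t. \<Sum>j\<in>J. single_rz j \<delta>2 t - single_rz i \<delta>2 t)"
  have "s \<in> S_set \<delta>1 \<delta>2 m"
    unfolding s_def sum_single_rz_diff[OF J(2,1)]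
    using spike_in_S_set[OF \<delta>2 _ J(2,1)] \<delta>1 J(3) below_m by simp
  moreover have "rznorm (f s t) < \<epsilon>" if t: "t < k" for t
  proof -
    have "f s t = (\<Sum>j\<in>J. f (\<lambda>t. single_rz j \<delta>2 t - single_rz i \<delta>2 t) t)"
      using is_hom_sum[OF f t J(2), of "\<lambda>j t. single_rz j \<delta>2 t - single_rz i \<delta>2 t"] single
      by (simp add: s_def ell1_diff)
    also have "\<dots> = (\<Sum>j\<in>J. f (single_rz j \<delta>2) t - f (single_rz i \<delta>2) t)"
      using single by (intro sum.cong refl is_hom_diff[OF f t]) auto
    finally have
      "rznorm (f s t) \<le> (\<Sum>j\<in>J. rznorm (f (single_rz j \<delta>2) t - f (single_rz i \<delta>2) t))"
      by (simp add: rznorm_sum_le)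
    also have "\<dots> \<le> (\<Sum>j\<in>J. 1 / real M)"
      using close[OF _ t] by (rule sum_mono)
    also have "\<dots> < \<epsilon>"
      using J(3) M(2) by simp
    finally show ?thesis .
  qed
  moreover have "0 < \<epsilon>"
    using M(2) divide_nonneg_nonneg[of "real n" "real M"] by linarith
  ultimately show ?thesis
    using rz_maxnorm_less by blast
qed

theorem mainTheorem3:
  shows "\<exists>c>0. \<forall>\<delta>1 \<delta>2 :: real. 0 < \<delta>1 \<longrightarrow> \<delta>1 < c \<longrightarrow> 0 < \<delta>2 \<longrightarrow> \<delta>2 < c \<longrightarrow>
     (\<exists>n::nat. \<delta>1 / \<delta>2 = real n) \<longrightarrow> \<delta>2 < \<delta>1 ^ 3 \<longrightarrow>
     (\<exists>g :: nat \<Rightarrow> real \<Rightarrow> nat. \<forall>k (\<epsilon>::real) (m::enat) f.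
        0 < \<epsilon> \<longrightarrow> enat (g k \<epsilon>) < m \<longrightarrow> is_hom m k f \<longrightarrow>
        (\<exists>s \<in> S_set \<delta>1 \<delta>2 m. rz_maxnorm k (f s) < \<epsilon>))"
proof (intro exI[of _ "1/2 :: real"] conjI allI impI)
  fix \<delta>1 \<delta>2 :: real
  assume "0 < \<delta>2" "\<delta>2 < 1/2" "\<exists>n::nat. \<delta>1 / \<delta>2 = real n"
  then obtain n :: nat where \<delta>1: "\<delta>1 = real n * \<delta>2"
    by (auto simp: field_simps)
  define M :: "real \<Rightarrow> nat" where "M \<epsilon> = nat \<lceil>real n / \<epsilon>\<rceil> + 1" for \<epsilon>
  have M: "0 < M \<epsilon>" "real n / real (M \<epsilon>) < \<epsilon>" if "0 < \<epsilon>" for \<epsilon>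
  proof -
    show pos: "0 < M \<epsilon>"
      by (simp add: M_def)
    have "real n / \<epsilon> < real (M \<epsilon>)"
      unfolding M_def by linarith
    then show "real n / real (M \<epsilon>) < \<epsilon>"
      using that pos by (simp add: pos_divide_less_eq algebra_simps)
  qed
  show "\<exists>g :: nat \<Rightarrow> real \<Rightarrow> nat. \<forall>k \<epsilon> m f. 0 < \<epsilon> \<longrightarrow> enat (g k \<epsilon>) < m \<longrightarrow>
      is_hom m k f \<longrightarrow> (\<exists>s \<in> S_set \<delta>1 \<delta>2 m. rz_maxnorm k (f s) < \<epsilon>)"
    using S_set_meets_Bohr_set[OF \<open>0 < \<delta>2\<close> \<open>\<delta>2 < 1/2\<close> \<delta>1 M]
    by (intro exI[of _ "\<lambda>k \<epsilon>. n * M \<epsilon> ^ k"]) blast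
qed simp

end
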